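(* Let $G \subset \mathrm{Diff}^1_+(\mathbb{S}^2)$ be a group with $\mathrm{M\ddot{o}b}(\mathbb{S}^2)\subsetneq G$. Then there exist $\hat g\in G_2$ and $0<\lambda<1$ such that $D\hat g(\mathbf{0})=\mathrm{diag}(\lambda,\lambda^{-1})$ with respect to the canonical basis $\{\partial/\partial x,\partial/\partial y\}$ of $T_{\mathbf{0}}\mathbb{S}^2$; in particular $\mathbf{0}$ is a hyperbolic saddle fixed point of $\hat g$.
   Context: $\mathbb{S}^2$ is identified with $\mathbb{C}\cup\{\infty\}$ by stereographic projection from the North Pole $\mathbf{\infty}$; $\mathbf{0}$ is the South Pole (the origin of $\mathbb{C}$), and $T_{\mathbf{0}}\mathbb{S}^2$ is identified with $\mathbb{R}^2=\mathbb{C}$ with canonical basis $\{\partial/\partial x,\partial/\partial y\}$. $\mathrm{Diff}^1_+(\mathbb{S}^2)$ is the group of orientation-preserving $C^1$ diffeomorphisms; $\mathrm{M\ddot{o}b}(\mathbb{S}^2)$ is the group of maps $z\mapsto (az+b)/(cz+d)$, $ad-bc=1$. $G_2=\{g\in G: g(\mathbf{0})=\mathbf{0},\ g(\mathbf{\infty})=\mathbf{\infty}\}$. *)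

theory Defs
  imports "HOL-Analysis.Analysis"
begin

text \<open>The sphere S^2 is modelled as the Riemann sphere: the type complex option,
  where Some z is the point of C (via stereographic projection from the North Pole)
  and None is the North Pole infinity. The South Pole 0 is Some 0.\<close>

type_synonym sphere = "complex option"

text \<open>The two standard parametrisations (inverse charts), each defined on all of C:
  param True = z gives Some z (image: S^2 minus infinity),
  param False = w gives 1/w, with 0 going to infinity (image: S^2 minus 0).\<close>

definition param :: "bool \<Rightarrow> complex \<Rightarrow> sphere" where
  "param b w = (if b then Some w else (if w = 0 then None else Some (inverse w)))"

text \<open>The corresponding charts (only meaningful on the image of param b).\<close>

definition chart :: "bool \<Rightarrow> sphere \<Rightarrow> complex" where
  "chart b p = (case p of None \<Rightarrow> 0 | Some z \<Rightarrow> (if b then z else inverse z))"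

definition sphere_open :: "sphere set \<Rightarrow> bool" where
  "sphere_open S \<longleftrightarrow> (\<forall>b. open (param b -` S))"

definition sphere_continuous :: "(sphere \<Rightarrow> sphere) \<Rightarrow> bool" where
  "sphere_continuous f \<longleftrightarrow> (\<forall>S. sphere_open S \<longrightarrow> sphere_open (f -` S))"

definition local_rep :: "(sphere \<Rightarrow> sphere) \<Rightarrow> bool \<Rightarrow> bool \<Rightarrow> complex \<Rightarrow> complex" where
  "local_rep f b1 b2 = (\<lambda>w. chart b2 (f (param b1 w)))"

definition local_dom :: "(sphere \<Rightarrow> sphere) \<Rightarrow> bool \<Rightarrow> bool \<Rightarrow> complex set" where
  "local_dom f b1 b2 = {w. f (param b1 w) \<in> range (param b2)}"

definition C1_on :: "complex set \<Rightarrow> (complex \<Rightarrow> complex) \<Rightarrow> bool" where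
  "C1_on W g \<longleftrightarrow> (\<exists>D :: complex \<Rightarrow> (complex \<Rightarrow>\<^sub>L complex).
      (\<forall>w\<in>W. (g has_derivative blinfun_apply (D w)) (at w)) \<and> continuous_on W D)"

text \<open>Determinant of a real-linear map C to C w.r.t. the basis 1, i (i.e. d/dx, d/dy).\<close>

definition real_det :: "(complex \<Rightarrow> complex) \<Rightarrow> real" where
  "real_det L = Re (L 1) * Im (L \<i>) - Im (L 1) * Re (L \<i>)"

definition sphere_C1 :: "(sphere \<Rightarrow> sphere) \<Rightarrow> bool" where
  "sphere_C1 f \<longleftrightarrow> sphere_continuous f \<and>
     (\<forall>b1 b2. C1_on (local_dom f b1 b2) (local_rep f b1 b2))"

definition Diff1_plus :: "(sphere \<Rightarrow> sphere) set" where
  "Diff1_plus = {f. bij f \<and> sphere_C1 f \<and> sphere_C1 (inv f) \<and>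
     (\<forall>b1 b2. \<forall>w\<in>local_dom f b1 b2. \<forall>L.
        (local_rep f b1 b2 has_derivative L) (at w) \<longrightarrow> real_det L > 0)}"

definition mobius :: "complex \<Rightarrow> complex \<Rightarrow> complex \<Rightarrow> complex \<Rightarrow> sphere \<Rightarrow> sphere" where
  "mobius a b c d p = (case p of
      None \<Rightarrow> (if c = 0 then None else Some (a / c))
    | Some z \<Rightarrow> (if c * z + d = 0 then None else Some ((a * z + b) / (c * z + d))))"

definition Mob :: "(sphere \<Rightarrow> sphere) set" where
  "Mob = {mobius a b c d | a b c d. a * d - b * c = 1}"

definition diff_subgroup :: "(sphere \<Rightarrow> sphere) set \<Rightarrow> bool" where
  "diff_subgroup G \<longleftrightarrow> G \<subseteq> Diff1_plus \<and> id \<in> G \<and>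
     (\<forall>f\<in>G. \<forall>g\<in>G. f \<circ> g \<in> G) \<and> (\<forall>f\<in>G. inv f \<in> G)"

definition G2 :: "(sphere \<Rightarrow> sphere) set \<Rightarrow> (sphere \<Rightarrow> sphere) set" where
  "G2 G = {g\<in>G. g (Some 0) = Some 0 \<and> g None = None}"

end

theory Submission
  imports Defs "HOL-Complex_Analysis.Complex_Analysis"
begin

(* Every g in G_2 has a derivative L at 0 with det L > 0; writing L h = alpha h + beta (cnj h),
   this means |beta| < |alpha|. If beta <> 0 for some such g, conjugating g by the Moebius scalings
   z -> u z and z -> v z brings L to diag(lambda, 1/lambda). Otherwise every element of G_2 is
   conformal at 0. For f in G_2, conjugation by translations then shows that the representative F
   of f on C is entire, and conjugation by z -> -1/z shows that F grows at most linearly at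
   infinity; by Liouville F is linear, so f is Moebius. Since every element of G becomes an
   element of G_2 after composition with a Moebius map, G = Moeb, contradicting Moeb < G. *)

section \<open>Moebius transformations\<close>

lemma mobius_Some:
  "mobius a b c d (Some z) = (if c * z + d = 0 then None else Some ((a * z + b) / (c * z + d)))"
  by (simp add: mobius_def)

lemma mobius_None: "mobius a b c d None = (if c = 0 then None else Some (a / c))"
  by (simp add: mobius_def)

lemma mobius_comp_None:
  assumes det: "a' * d' - b' * c' = 1"
  shows "mobius a b c d (mobius a' b' c' d' None) =
         mobius (a*a' + b*c') (a*b' + b*d') (c*a' + d*c') (c*b' + d*d') None"
proof (cases "c' = 0")
  case True
  with det have "a' \<noteq> 0"
    by auto
  with True show ?thesis
    by (simp add: mobius_Some mobius_None)
next
  case False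
  have num: "a * (a' / c') + b = (a*a' + b*c') / c'"
    and den: "c * (a' / c') + d = (c*a' + d*c') / c'"
    using False by (simp_all add: field_simps)
  from False have "mobius a b c d (mobius a' b' c' d' None) = mobius a b c d (Some (a' / c'))"
    by (simp add: mobius_None)
  also have "\<dots> = (if (c*a' + d*c') / c' = 0 then None
                   else Some (((a*a' + b*c') / c') / ((c*a' + d*c') / c')))"
    by (simp only: mobius_Some num den)
  also have "\<dots> = mobius (a*a' + b*c') (a*b' + b*d') (c*a' + d*c') (c*b' + d*d') None"
    using False by (simp add: mobius_None)
  finally show ?thesis .
qed

lemma mobius_comp_Some:
  assumes det: "a' * d' - b' * c' = 1"
  shows "mobius a b c d (mobius a' b' c' d' (Some z)) =
         mobius (a*a' + b*c') (a*b' + b*d') (c*a' + d*c') (c*b' + d*d') (Some z)"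
proof (cases "c' * z + d' = 0")
  case True
  have "a' * z + b' \<noteq> 0"
  proof
    assume "a' * z + b' = 0"
    moreover have "a' * d' - b' * c' = a' * (c' * z + d') - (a' * z + b') * c'"
      by (simp add: algebra_simps)
    ultimately show False
      using True det by simp
  qed
  moreover have "(c*a' + d*c') * z + (c*b' + d*d') = c * (a' * z + b') + d * (c' * z + d')"
    and "(a*a' + b*c') * z + (a*b' + b*d') = a * (a' * z + b') + b * (c' * z + d')"
    by (simp_all add: algebra_simps)
  ultimately show ?thesis
    using True by (simp add: mobius_Some mobius_None)
next
  case False
  define w where "w = (a' * z + b') / (c' * z + d')"
  have "c * w + d = ((c*a' + d*c') * z + (c*b' + d*d')) / (c' * z + d')"
    and "a * w + b = ((a*a' + b*c') * z + (a*b' + b*d')) / (c' * z + d')"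
    using False by (simp_all add: w_def field_simps)
  with False show ?thesis
    by (simp add: mobius_Some w_def[symmetric])
qed

lemma mobius_comp:
  assumes "a' * d' - b' * c' = 1"
  shows "mobius a b c d \<circ> mobius a' b' c' d' =
         mobius (a*a' + b*c') (a*b' + b*d') (c*a' + d*c') (c*b' + d*d')"
proof
  fix x
  show "(mobius a b c d \<circ> mobius a' b' c' d') x =
      mobius (a*a' + b*c') (a*b' + b*d') (c*a' + d*c') (c*b' + d*d') x"
    using assms by (cases x) (simp_all only: comp_apply mobius_comp_None mobius_comp_Some)
qed

lemma mobius_id: "mobius 1 0 0 1 = id"
  by (rule ext) (simp add: mobius_def split: option.splits)

lemma Mob_comp:
  assumes "f \<in> Mob" "g \<in> Mob"
  shows "f \<circ> g \<in> Mob"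
proof -
  obtain a b c d a' b' c' d' where f: "f = mobius a b c d" "a * d - b * c = 1"
    and g: "g = mobius a' b' c' d'" "a' * d' - b' * c' = 1"
    using assms unfolding Mob_def by blast
  have "(a*a' + b*c') * (c*b' + d*d') - (a*b' + b*d') * (c*a' + d*c') =
        (a * d - b * c) * (a' * d' - b' * c')"
    by (simp add: algebra_simps)
  with f g show ?thesis
    unfolding Mob_def by (auto simp: mobius_comp)
qed

lemma Mob_inverse:
  assumes "T \<in> Mob"
  obtains S where "S \<in> Mob" "S \<circ> T = id"
proof -
  obtain a b c d where T: "T = mobius a b c d" "a * d - b * c = 1"
    using assms unfolding Mob_def by blast
  then have "mobius d (-b) (-c) a \<in> Mob"
    unfolding Mob_def
    by (intro CollectI exI[of _ d] exI[of _ "-b"] exI[of _ "-c"] exI[of _ a])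
       (simp add: algebra_simps)
  moreover from T have "mobius d (-b) (-c) a \<circ> T = id"
    by (simp add: mobius_comp algebra_simps flip: mobius_id)
  ultimately show thesis
    by (rule that)
qed

lemma Mob_cancel_left:
  assumes "T \<in> Mob" "T \<circ> f \<in> Mob"
  shows "f \<in> Mob"
proof -
  obtain S where "S \<in> Mob" "S \<circ> T = id"
    using assms(1) by (rule Mob_inverse)
  then have "f = S \<circ> (T \<circ> f)"
    by (metis comp_assoc id_comp)
  with \<open>S \<in> Mob\<close> assms(2) show ?thesis
    by (metis Mob_comp)
qed

lemma Mob_normalize_pair:
  assumes "x \<noteq> y"
  obtains T where "T \<in> Mob" "T x = None" "T y = Some 0"
proof (cases x)
  case None
  with assms obtain r where "y = Some r"
    by (cases y) auto
  moreover have "mobius 1 (- r) 0 1 \<in> Mob"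
    unfolding Mob_def by force
  ultimately show thesis
    using None that by (auto simp: mobius_def)
next
  case (Some p)
  show thesis
  proof (cases y)
    case None
    have "mobius 0 (-1) 1 (- p) \<in> Mob"
      unfolding Mob_def by force
    with None Some that show thesis
      by (auto simp: mobius_def)
  next
    case (Some r)
    with \<open>x = Some p\<close> assms have "r - p \<noteq> 0"
      by auto
    define q where "q = 1 / (r - p)"
    have "q * (r - p) = 1"
      using \<open>r - p \<noteq> 0\<close> by (simp add: q_def)
    then have q: "q * r + - q * p = 1" "1 * (- q * p) - (- r) * q = 1"
      by (simp_all add: algebra_simps)
    then have "mobius 1 (- r) q (- q * p) \<in> Mob"
      unfolding Mob_def by blast
    with q Some \<open>x = Some p\<close> that show thesis
      by (auto simp: mobius_def)
  qed
qed

definition scaling :: "complex \<Rightarrow> sphere \<Rightarrow> sphere" where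
  "scaling u = mobius (csqrt u) 0 0 (inverse (csqrt u))"

definition translation :: "complex \<Rightarrow> sphere \<Rightarrow> sphere" where
  "translation c = mobius 1 c 0 1"

definition inversion :: "sphere \<Rightarrow> sphere" where
  "inversion = mobius 0 (-1) 1 0"

lemma scaling_Some: "u \<noteq> 0 \<Longrightarrow> scaling u (Some z) = Some (u * z)"
  using power2_csqrt[of u] by (auto simp: scaling_def mobius_Some field_simps power2_eq_square)

lemma scaling_None: "scaling u None = None"
  by (simp add: scaling_def mobius_None)

lemma scaling_Mob: "u \<noteq> 0 \<Longrightarrow> scaling u \<in> Mob"
  unfolding Mob_def scaling_def
  by (intro CollectI exI[of _ "csqrt u"] exI[of _ 0] exI[of _ "inverse (csqrt u)"]) simp

lemma translation_Some: "translation c (Some z) = Some (z + c)"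
  by (simp add: translation_def mobius_Some)

lemma translation_None: "translation c None = None"
  by (simp add: translation_def mobius_None)

lemma translation_Mob: "translation c \<in> Mob"
  unfolding Mob_def translation_def by force

lemma inversion_Some: "inversion (Some w) = (if w = 0 then None else Some (- inverse w))"
  by (simp add: inversion_def mobius_Some divide_inverse)

lemma inversion_None: "inversion None = Some 0"
  by (simp add: inversion_def mobius_None)

lemma inversion_Mob: "inversion \<in> Mob"
  unfolding Mob_def inversion_def by force

section \<open>Elements of G and their derivatives at 0\<close>

lemma diff_subgroup_inj: "diff_subgroup G \<Longrightarrow> f \<in> G \<Longrightarrow> inj f"
  unfolding diff_subgroup_def Diff1_plus_def by (auto intro: bij_is_inj)

lemma diff_subgroup_comp: "diff_subgroup G \<Longrightarrow> f \<in> G \<Longrightarrow> g \<in> G \<Longrightarrow> f \<circ> g \<in> G"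
  unfolding diff_subgroup_def by blast

lemma diff_subgroup_Mob_conj:
  assumes "diff_subgroup G" "Mob \<subseteq> G" "S \<in> Mob" "T \<in> Mob" "f \<in> G"
  shows "S \<circ> f \<circ> T \<in> G"
  using assms by (blast intro: diff_subgroup_comp)

lemma local_rep_True_True:
  "local_rep g True True w = (case g (Some w) of None \<Rightarrow> 0 | Some z \<Rightarrow> z)"
  by (simp add: local_rep_def chart_def param_def split: option.splits)

lemma Some_local_rep:
  assumes "inj f" "f None = None"
  shows "f (Some z) = Some (local_rep f True True z)"
proof -
  from assms have "f (Some z) \<noteq> None"
    by (metis injD option.distinct(1))
  then show ?thesis
    by (auto simp: local_rep_True_True)
qed

lemma G2_differentiable_at_0:
  assumes "diff_subgroup G" "g \<in> G2 G"
  obtains L where "(local_rep g True True has_derivative L) (at 0)"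
proof -
  from assms have "g \<in> Diff1_plus" and "0 \<in> local_dom g True True"
    by (auto simp: diff_subgroup_def G2_def local_dom_def param_def)
  then show thesis
    unfolding Diff1_plus_def sphere_C1_def C1_on_def by (blast intro: that)
qed

lemma G2_real_det_pos:
  assumes "diff_subgroup G" "g \<in> G2 G"
    and "(local_rep g True True has_derivative L) (at 0)"
  shows "real_det L > 0"
proof -
  from assms(1,2) have "g \<in> Diff1_plus" and "0 \<in> local_dom g True True"
    by (auto simp: diff_subgroup_def G2_def local_dom_def param_def)
  with assms(3) show ?thesis
    unfolding Diff1_plus_def by blast
qed

section \<open>Normal form of non-conformal derivatives\<close>

lemma real_linear_wirtinger:
  assumes "bounded_linear L"
  shows "L h = (L 1 - \<i> * L \<i>) / 2 * h + (L 1 + \<i> * L \<i>) / 2 * cnj h"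
proof -
  interpret bounded_linear L by fact
  have "h = Re h *\<^sub>R 1 + Im h *\<^sub>R \<i>"
    by (simp add: complex_eq_iff)
  then have "L h = Re h *\<^sub>R L 1 + Im h *\<^sub>R L \<i>"
    by (metis add scale)
  then show ?thesis
    by (simp add: complex_eq_iff scaleR_conv_of_real field_simps)
qed

lemma real_det_wirtinger:
  "real_det L = (norm ((L 1 - \<i> * L \<i>) / 2))\<^sup>2 - (norm ((L 1 + \<i> * L \<i>) / 2))\<^sup>2"
  unfolding real_det_def cmod_power2 by (simp add: power2_eq_square field_simps)

lemma saddle_parameter:
  fixes r :: real
  assumes "r > 1"
  obtains l where "0 < l" "l < 1" "l + 1 / l = r * (1 / l - l)"
proof
  define l where "l = sqrt ((r - 1) / (r + 1))"
  show "0 < l" "l < 1"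
    using assms by (simp_all add: l_def)
  have "l\<^sup>2 * (r + 1) = r - 1"
    using assms by (simp add: l_def)
  with \<open>0 < l\<close> show "l + 1 / l = r * (1 / l - l)"
    by (simp add: field_simps power2_eq_square)
qed

lemma real_linear_saddle_normal_form:
  fixes \<alpha> \<beta> :: complex
  assumes "norm \<beta> < norm \<alpha>" "\<beta> \<noteq> 0"
  obtains u v l where "u \<noteq> 0" "v \<noteq> 0" "0 < l" "l < 1"
    "\<And>h. u * (\<alpha> * (v * h) + \<beta> * cnj (v * h)) = Complex (l * Re h) (Im h / l)"
proof -
  define r where "r = norm \<alpha> / norm \<beta>"
  have "\<alpha> \<noteq> 0" "r > 1"
    using assms by (auto simp: r_def)
  obtain l where l: "0 < l" "l < 1" "l + 1 / l = r * (1 / l - l)"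
    using saddle_parameter[OF \<open>r > 1\<close>] .
  text \<open>The target map is \<open>h \<mapsto> A h + B cnj h\<close>. A unit \<open>v\<close> with \<open>v\<^sup>2 = - r \<beta> / \<alpha>\<close> makes
    the coefficients \<open>\<alpha> v\<close> and \<open>\<beta> cnj v\<close> real multiples of each other in the ratio \<open>A : B\<close>,
    and \<open>u\<close> normalises them.\<close>
  define A where "A = (l + 1 / l) / 2"
  define B where "B = (l - 1 / l) / 2"
  define v where "v = csqrt (- of_real r * \<beta> / \<alpha>)"
  define u where "u = of_real A / (\<alpha> * v)"
  have v2: "v * v = - of_real r * \<beta> / \<alpha>"
    unfolding v_def by (metis power2_csqrt power2_eq_square)
  then have "norm v * norm v = 1"
    using \<open>\<alpha> \<noteq> 0\<close> \<open>\<beta> \<noteq> 0\<close> \<open>r > 1\<close> by (simp add: r_def flip: norm_mult) (simp add: norm_divide norm_mult)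
  then have "v * cnj v = 1"
    by (metis complex_norm_square of_real_1 power2_eq_square)
  then have "v \<noteq> 0" and cnj_v: "cnj v = inverse v"
    by (auto intro: inverse_unique[symmetric])
  have "A > 0"
    using \<open>0 < l\<close> by (simp add: A_def add_pos_pos)
  then have "u \<noteq> 0"
    using \<open>\<alpha> \<noteq> 0\<close> \<open>v \<noteq> 0\<close> by (simp add: u_def)
  have "u * \<alpha> * v = of_real A"
    using \<open>\<alpha> \<noteq> 0\<close> \<open>v \<noteq> 0\<close> by (simp add: u_def)
  moreover have "u * \<beta> * cnj v = of_real B"
  proof -
    have "u * \<beta> * cnj v = of_real A * \<beta> / (\<alpha> * (v * v))"
      using \<open>v \<noteq> 0\<close> by (simp add: u_def cnj_v field_simps)
    also have "\<dots> = of_real (- A / r)"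
      using \<open>\<alpha> \<noteq> 0\<close> \<open>\<beta> \<noteq> 0\<close> \<open>r > 1\<close> by (simp add: v2 field_simps)
    also have "A = - r * B"
      using l(3) unfolding A_def B_def by argo
    then have "- A / r = B"
      using \<open>r > 1\<close> by simp
    finally show ?thesis .
  qed
  ultimately have "u * (\<alpha> * (v * h) + \<beta> * cnj (v * h)) = of_real A * h + of_real B * cnj h" for h
    by (simp add: algebra_simps flip: \<open>u * \<alpha> * v = of_real A\<close>)
  also have "of_real A * h + of_real B * cnj h = Complex (l * Re h) (Im h / l)" for h
    using \<open>0 < l\<close> by (simp add: complex_eq_iff A_def B_def field_simps)
  finally have "u * (\<alpha> * (v * h) + \<beta> * cnj (v * h)) = Complex (l * Re h) (Im h / l)" for h .
  with \<open>u \<noteq> 0\<close> \<open>v \<noteq> 0\<close> l show thesis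
    using that by blast
qed

lemma local_rep_scaling_conj:
  assumes "u \<noteq> 0" "v \<noteq> 0"
  shows "local_rep (scaling u \<circ> g \<circ> scaling v) True True = (\<lambda>w. u * local_rep g True True (v * w))"
  using assms
  by (auto simp: local_rep_True_True scaling_Some scaling_None split: option.splits)

lemma G2_saddle_of_non_complex_linear:
  assumes G: "diff_subgroup G" and "Mob \<subseteq> G" and g: "g \<in> G2 G"
    and L: "(local_rep g True True has_derivative L) (at 0)"
    and non_complex_linear: "L h \<noteq> L 1 * h"
  shows "\<exists>g\<in>G2 G. \<exists>l::real. 0 < l \<and> l < 1 \<and>
           (local_rep g True True has_derivative (\<lambda>h. Complex (l * Re h) (Im h / l))) (at 0)"
proof -
  define \<alpha> where "\<alpha> = (L 1 - \<i> * L \<i>) / 2"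
  define \<beta> where "\<beta> = (L 1 + \<i> * L \<i>) / 2"
  have L_eq: "L h = \<alpha> * h + \<beta> * cnj h" for h
    unfolding \<alpha>_def \<beta>_def using L by (intro real_linear_wirtinger has_derivative_bounded_linear)
  with non_complex_linear have "\<beta> \<noteq> 0"
    by auto
  have "(norm \<beta>)\<^sup>2 < (norm \<alpha>)\<^sup>2"
    using G2_real_det_pos[OF G g L] real_det_wirtinger[of L] by (simp add: \<alpha>_def \<beta>_def)
  then have "norm \<beta> < norm \<alpha>"
    by (simp add: power_less_imp_less_base)
  then obtain u v l where "u \<noteq> 0" "v \<noteq> 0" "0 < l" "l < 1"
    and normal: "\<And>h. u * (\<alpha> * (v * h) + \<beta> * cnj (v * h)) = Complex (l * Re h) (Im h / l)"
    using real_linear_saddle_normal_form \<open>\<beta> \<noteq> 0\<close> by blast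
  define g' where "g' = scaling u \<circ> g \<circ> scaling v"
  have "g' \<in> G2 G"
    using g diff_subgroup_Mob_conj[OF G \<open>Mob \<subseteq> G\<close> scaling_Mob scaling_Mob]
      \<open>u \<noteq> 0\<close> \<open>v \<noteq> 0\<close>
    by (auto simp: G2_def g'_def scaling_Some scaling_None)
  have "((\<lambda>w. v * w) has_derivative (\<lambda>h. v * h)) (at 0)"
    by (rule has_derivative_mult_right[OF has_derivative_ident])
  from has_derivative_compose[OF this] L
  have "((\<lambda>w. u * local_rep g True True (v * w)) has_derivative (\<lambda>h. u * L (v * h))) (at 0)"
    by (auto intro: has_derivative_mult_right)
  then have "(local_rep g' True True has_derivative (\<lambda>h. Complex (l * Re h) (Im h / l))) (at 0)"
    unfolding g'_def local_rep_scaling_conj[OF \<open>u \<noteq> 0\<close> \<open>v \<noteq> 0\<close>] L_eq normal .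
  with \<open>g' \<in> G2 G\<close> \<open>0 < l\<close> \<open>l < 1\<close> show ?thesis
    by blast
qed

section \<open>Rigidity in the conformal case\<close>

lemma linear_growth_if_inversion_differentiable:
  fixes F :: "complex \<Rightarrow> complex"
  assumes F0: "F 0 = 0"
    and deriv: "((\<lambda>w. - inverse (F (- inverse w))) has_field_derivative c) (at 0)"
    and c: "c \<noteq> 0"
  obtains R where "\<And>z. R \<le> norm z \<Longrightarrow> norm (F z) \<le> 2 / norm c * norm z"
proof -
  have "((\<lambda>w. - inverse (F (- inverse w)) / w) \<longlongrightarrow> c) (at 0)"
    using deriv F0 by (simp add: has_field_derivative_iff)
  then have "\<forall>\<^sub>F w in at 0. norm c / 2 < norm (- inverse (F (- inverse w)) / w)"
    using c by (intro order_tendstoD(1)[OF tendsto_norm]) auto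
  then obtain d where "d > 0" and near:
    "\<And>w. w \<noteq> 0 \<Longrightarrow> norm w < d \<Longrightarrow> norm c / 2 < norm (inverse (F (- inverse w))) / norm w"
    by (auto simp: eventually_at norm_divide)
  show thesis
  proof
    fix z :: complex
    assume z: "2 / d \<le> norm z"
    have "0 < 2 / d"
      using \<open>d > 0\<close> by simp
    from z \<open>0 < 2 / d\<close> have "z \<noteq> 0"
      by auto
    have "norm (- inverse z) = inverse (norm z)"
      by (simp add: norm_inverse)
    also have "\<dots> \<le> d / 2"
      using z \<open>0 < 2 / d\<close> by (metis inverse_divide le_imp_inverse_le)
    also have "\<dots> < d"
      using \<open>d > 0\<close> by simp
    finally have "norm (- inverse z) < d" .
    with near[of "- inverse z"] \<open>z \<noteq> 0\<close>
    have "norm c / 2 < norm (inverse (F z)) / norm (- inverse z)"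
      by simp
    then have "norm c / 2 < norm (inverse (F z)) * norm z"
      by (simp only: norm_minus_cancel norm_inverse divide_inverse inverse_inverse_eq)
    then have "F z \<noteq> 0"
      by auto
    with \<open>norm c / 2 < norm (inverse (F z)) * norm z\<close>
    have "norm c / 2 * norm (F z) < norm z"
      by (simp add: norm_inverse pos_less_divide_eq flip: divide_inverse_commute)
    with c show "norm (F z) \<le> 2 / norm c * norm z"
      by (simp add: field_simps)
  qed
qed

lemma linear_if_inversion_differentiable:
  fixes F :: "complex \<Rightarrow> complex"
  assumes "F holomorphic_on UNIV" "F 0 = 0"
    and "((\<lambda>w. - inverse (F (- inverse w))) has_field_derivative c) (at 0)" "c \<noteq> 0"
  shows "F z = deriv F 0 * z"
proof -
  obtain R where "\<And>z. R \<le> norm z \<Longrightarrow> norm (F z) \<le> 2 / norm c * norm z ^ 1"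
    using linear_growth_if_inversion_differentiable assms(2-4) by (metis power_one_right)
  from Liouville_polynomial[OF assms(1) this] show ?thesis
    using assms(2) by simp
qed

lemma local_rep_translation_conj:
  assumes "\<And>z. f (Some z) = Some (F z)"
  shows "local_rep (translation (- F z0) \<circ> f \<circ> translation z0) True True =
         (\<lambda>w. F (w + z0) - F z0)"
  by (rule ext) (simp add: local_rep_True_True translation_Some assms)

lemma local_rep_inversion_conj:
  assumes "\<And>z. f (Some z) = Some (F z)" "f None = None"
    and "\<And>z. F z = 0 \<longleftrightarrow> z = 0"
  shows "local_rep (inversion \<circ> f \<circ> inversion) True True = (\<lambda>w. - inverse (F (- inverse w)))"
  by (rule ext) (simp add: local_rep_True_True inversion_Some inversion_None assms)

lemma entire_if_G2_field_differentiable: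
  assumes G: "diff_subgroup G" and "Mob \<subseteq> G"
    and conformal: "\<And>g. g \<in> G2 G \<Longrightarrow> local_rep g True True field_differentiable (at 0)"
    and "f \<in> G" and fF: "\<And>z. f (Some z) = Some (F z)" and "f None = None"
  shows "F holomorphic_on UNIV"
  unfolding holomorphic_on_open[OF open_UNIV]
proof
  fix z0 :: complex
  define g where "g = translation (- F z0) \<circ> f \<circ> translation z0"
  have "g \<in> G2 G"
    using diff_subgroup_Mob_conj[OF G \<open>Mob \<subseteq> G\<close> translation_Mob translation_Mob \<open>f \<in> G\<close>]
    by (simp add: G2_def g_def translation_Some translation_None fF \<open>f None = None\<close>)
  then have "local_rep g True True field_differentiable (at 0)"
    by (rule conformal)
  then obtain c where "((\<lambda>w. F (w + z0) - F z0) has_field_derivative c) (at 0)"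
    unfolding g_def local_rep_translation_conj[of f F, OF fF] field_differentiable_def ..
  then have "((\<lambda>w. F (w + z0) - F z0 + F z0) has_field_derivative c + 0) (at 0)"
    by (intro DERIV_add DERIV_const)
  then have "((\<lambda>w. F (w + z0)) has_field_derivative c) (at 0)"
    by simp
  then have "(F has_field_derivative c) (at (0 + z0))"
    by (simp only: DERIV_shift)
  then show "\<exists>c. (F has_field_derivative c) (at z0)"
    by auto
qed

lemma G2_subset_Mob_if_conformal:
  assumes G: "diff_subgroup G" and "Mob \<subseteq> G"
    and conformal: "\<And>g. g \<in> G2 G \<Longrightarrow>
      \<exists>c. c \<noteq> 0 \<and> (local_rep g True True has_field_derivative c) (at 0)"
  shows "G2 G \<subseteq> Mob"
proof
  fix f
  assume "f \<in> G2 G"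
  then have "f \<in> G" "f None = None" "f (Some 0) = Some 0"
    by (auto simp: G2_def)
  define F where "F = local_rep f True True"
  have "inj f"
    using G \<open>f \<in> G\<close> by (rule diff_subgroup_inj)
  then have fF: "f (Some z) = Some (F z)" for z
    unfolding F_def using \<open>f None = None\<close> by (rule Some_local_rep)
  have F_eq_0: "F z = 0 \<longleftrightarrow> z = 0" for z
    using \<open>inj f\<close> \<open>f (Some 0) = Some 0\<close> by (metis fF injD option.inject)
  have "F holomorphic_on UNIV"
    using entire_if_G2_field_differentiable[OF G \<open>Mob \<subseteq> G\<close> _ \<open>f \<in> G\<close> fF \<open>f None = None\<close>]
      conformal by (metis field_differentiable_def)
  have "inversion \<circ> f \<circ> inversion \<in> G2 G"
    using diff_subgroup_Mob_conj[OF G \<open>Mob \<subseteq> G\<close> inversion_Mob inversion_Mob \<open>f \<in> G\<close>]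
    by (simp add: G2_def inversion_Some inversion_None fF F_eq_0 \<open>f None = None\<close>)
  then obtain c where "c \<noteq> 0"
    and "((\<lambda>w. - inverse (F (- inverse w))) has_field_derivative c) (at 0)"
    using conformal local_rep_inversion_conj[of f F, OF fF \<open>f None = None\<close> F_eq_0] by metis
  then have F_linear: "F z = deriv F 0 * z" for z
    using linear_if_inversion_differentiable \<open>F holomorphic_on UNIV\<close> F_eq_0 by blast
  then have "deriv F 0 \<noteq> 0"
    using F_eq_0[of 1] by auto
  have "f = scaling (deriv F 0)"
  proof
    fix x
    show "f x = scaling (deriv F 0) x"
      by (cases x) (simp_all add: \<open>f None = None\<close> scaling_None scaling_Some fF F_linear \<open>deriv F 0 \<noteq> 0\<close>)
  qed
  with \<open>deriv F 0 \<noteq> 0\<close> show "f \<in> Mob"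
    by (simp add: scaling_Mob)
qed

lemma G_subset_Mob_if_conformal:
  assumes G: "diff_subgroup G" and "Mob \<subseteq> G"
    and conformal: "\<And>g. g \<in> G2 G \<Longrightarrow>
      \<exists>c. c \<noteq> 0 \<and> (local_rep g True True has_field_derivative c) (at 0)"
  shows "G \<subseteq> Mob"
proof
  fix f
  assume "f \<in> G"
  then have "f None \<noteq> f (Some 0)"
    using diff_subgroup_inj[OF G] by (metis injD option.distinct(1))
  then obtain T where "T \<in> Mob" "T (f None) = None" "T (f (Some 0)) = Some 0"
    by (rule Mob_normalize_pair)
  moreover have "T \<circ> f \<in> G"
    using diff_subgroup_comp[OF G] \<open>Mob \<subseteq> G\<close> \<open>T \<in> Mob\<close> \<open>f \<in> G\<close> by blast
  ultimately have "T \<circ> f \<in> G2 G"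
    by (simp add: G2_def)
  then have "T \<circ> f \<in> Mob"
    using G2_subset_Mob_if_conformal[OF assms] by blast
  with \<open>T \<in> Mob\<close> show "f \<in> Mob"
    by (rule Mob_cancel_left)
qed

lemma G2_field_derivative_if_complex_linear:
  assumes "diff_subgroup G" "g \<in> G2 G"
    and complex_linear: "\<And>L h. (local_rep g True True has_derivative L) (at 0) \<Longrightarrow> L h = L 1 * h"
  shows "\<exists>c. c \<noteq> 0 \<and> (local_rep g True True has_field_derivative c) (at 0)"
proof -
  obtain L where L: "(local_rep g True True has_derivative L) (at 0)"
    using G2_differentiable_at_0[OF assms(1,2)] .
  then have "L = (\<lambda>h. L 1 * h)"
    using complex_linear by blast
  moreover have "real_det L > 0"
    using G2_real_det_pos[OF assms(1,2) L] .
  ultimately have "L 1 \<noteq> 0"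
    by (metis mult_zero_left real_det_def zero_complex.sel(1,2) order_less_irrefl diff_self)
  with L \<open>L = (\<lambda>h. L 1 * h)\<close> show ?thesis
    by (metis has_field_derivative_def)
qed

theorem mainTheorem5:
  fixes G :: "(sphere \<Rightarrow> sphere) set"
  assumes "diff_subgroup G"
    and "Mob \<subset> G"
  shows "\<exists>g\<in>G2 G. \<exists>l::real. 0 < l \<and> l < 1 \<and>
           (local_rep g True True has_derivative
              (\<lambda>h. Complex (l * Re h) (Im h / l))) (at 0)"
proof (cases "\<exists>g\<in>G2 G. \<exists>L h. (local_rep g True True has_derivative L) (at 0) \<and> L h \<noteq> L 1 * h")
  case True
  then obtain g L h where "g \<in> G2 G" "(local_rep g True True has_derivative L) (at 0)" "L h \<noteq> L 1 * h"
    by blast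
  with assms show ?thesis
    by (intro G2_saddle_of_non_complex_linear) auto
next
  case False
  then have "G \<subseteq> Mob"
    using G_subset_Mob_if_conformal G2_field_derivative_if_complex_linear assms by blast
  with assms(2) show ?thesis
    by blast
qed

end
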